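(* For $n>1$ and $k\ge1$, \[ \frac{1}{\varphi(n)^k}\frac{\Phi_n^{(k)}(1)}{\Phi_n(1)}=k!\sum_{(\ast)}\prod_{i=1}^k\frac{(-1)^{i\lambda_i}}{\lambda_i!}\left(\frac{B_i}{i!\cdot i}\right)^{\lambda_i}\frac{J_i(n)^{\lambda_i}}{\varphi(n)^k}+O_k\!\left(\frac{n^{k-1}}{\varphi(n)^k}\right), \] where $\sum_{(\ast)}$ runs over all tuples of non-negative integers $(\lambda_1,\ldots,\lambda_k)$ with $\lambda_1+2\lambda_2+\cdots+k\lambda_k=k$ (and the product over $i$ is taken inside the sum).
   Context: $p$ denotes a prime; $\varphi$ is Euler's totient; $J_i(n)=n^i\prod_{p\mid n}(1-p^{-i})$. $\Phi_n(X)=\prod_{1\le j\le n,\,(j,n)=1}(X-\zeta_n^j)$ is the $n$-th cyclotomic polynomial. Bernoulli numbers: $B_0=1$ and $B_n=-\sum_{k=0}^{n-1}\binom{n}{k}\frac{B_k}{n-k+1}$ (so $B_1=-1/2$). *)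

theory Defs
  imports "HOL-Analysis.Analysis" "HOL-Computational_Algebra.Polynomial" "HOL-Number_Theory.Number_Theory"
begin

definition cyclotomic_poly :: "nat \<Rightarrow> complex poly" where
  "cyclotomic_poly n =
     (\<Prod>j\<in>{j. 1 \<le> j \<and> j \<le> n \<and> coprime j n}. [:- cis (2 * pi * real j / real n), 1:])"

text \<open>Bernoulli numbers, B_0 = 1, B_n = - sum_{k<n} binom(n,k) B_k/(n-k+1) (so B_1 = -1/2).\<close>
fun bernoulli_num :: "nat \<Rightarrow> real" where
  "bernoulli_num n =
     (if n = 0 then 1
      else - (\<Sum>k<n. real (n choose k) * bernoulli_num k / real (n - k + 1)))"

definition jordan_totient :: "nat \<Rightarrow> nat \<Rightarrow> real" where
  "jordan_totient i n = real n ^ i * (\<Prod>p\<in>prime_factors n. (1 - 1 / real p ^ i))"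

definition partition_tuples :: "nat \<Rightarrow> (nat \<Rightarrow> nat) set" where
  "partition_tuples k = {l. (\<forall>i. i \<notin> {1..k} \<longrightarrow> l i = 0) \<and> (\<Sum>i=1..k. i * l i) = k}"

end

theory Submission
  imports
    Defs
    "HOL-Computational_Algebra.Polynomial_FPS"
    "HOL-Computational_Algebra.Fundamental_Theorem_Algebra"
begin

text \<open>Substituting \<open>x = e\<^sup>t\<close>, the logarithmic derivative of \<open>\<Phi>\<^sub>n(e\<^sup>t)\<close> is the sum of
  \<open>e\<^sup>t/(e\<^sup>t - \<zeta>)\<close> over the primitive \<open>n\<close>-th roots of unity \<open>\<zeta>\<close>. Over all \<open>M\<close>-th roots
  this sum is a difference of Bernoulli generating functions, and inclusion-exclusion over the
  prime factors of \<open>n\<close> turns the powers of \<open>M = n/d\<close> into Jordan totients. Hence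
  \<open>\<Phi>\<^sub>n(e\<^sup>t) = \<Phi>\<^sub>n(1) exp (\<Sum>\<^sub>i y\<^sub>i t\<^sup>i)\<close> with
  \<open>y\<^sub>i = (-1)\<^sup>i B\<^sub>i J\<^sub>i(n) / (i \<cdot> i!)\<close>, whose \<open>t\<^sup>k\<close>-coefficient is the partition sum of the
  main term. On the other hand \<open>\<Phi>\<^sub>n(e\<^sup>t) = \<Sum>\<^sub>i c\<^sub>i (e\<^sup>t - 1)\<^sup>i\<close> with
  \<open>c\<^sub>i = \<Phi>\<^sub>n\<^sup>(\<^sup>i\<^sup>)(1)/i!\<close>, and \<open>(e\<^sup>t - 1)\<^sup>i = t\<^sup>i + O(t\<^sup>i\<^sup>+\<^sup>1)\<close>. Solving this unitriangular
  system with \<open>J\<^sub>i(n) \<le> n\<^sup>i\<close> shows that \<open>c\<^sub>k/\<Phi>\<^sub>n(1)\<close> differs from the \<open>k\<close>-th partition sum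
  by \<open>O(n\<^sup>k\<^sup>-\<^sup>1)\<close>.\<close>

unbundle no vec_syntax
unbundle fps_syntax

section \<open>Bernoulli numbers\<close>

lemma bernoulli_num_0 [simp]: "bernoulli_num 0 = 1"
  by (simp add: bernoulli_num.simps)

lemma bernoulli_num_1 [simp]: "bernoulli_num 1 = -1/2"
  by (simp add: bernoulli_num.simps)

declare bernoulli_num.simps [simp del]

lemma sum_binomial_bernoulli_num:
  assumes "n \<ge> 2"
  shows "(\<Sum>j<n. real (n choose j) * bernoulli_num j) = 0"
proof -
  obtain m where n: "n = Suc m" and m: "m \<ge> 1" using assms by (cases n) auto
  have choose: "real (n choose j) = real n * (real (m choose j) / real (m - j + 1))" if "j < m" for j
  proof -
    have "real (n - j) * real (n choose j) = real n * real (m choose j)"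
      using binomial_absorb_comp[of n j] n by (metis of_nat_mult diff_Suc_1)
    moreover have "n - j = m - j + 1" using that n by simp
    ultimately show ?thesis by (simp add: field_simps)
  qed
  have bernoulli_m: "bernoulli_num m = - (\<Sum>j<m. real (m choose j) * bernoulli_num j / real (m - j + 1))"
    using m by (subst bernoulli_num.simps) simp
  have "(\<Sum>j<n. real (n choose j) * bernoulli_num j)
      = (\<Sum>j<m. real (n choose j) * bernoulli_num j) + real n * bernoulli_num m"
    by (simp add: n)
  also have "\<dots> = (\<Sum>j<m. real n * (real (m choose j) * bernoulli_num j / real (m - j + 1)))
      + real n * bernoulli_num m"
    by (intro arg_cong2[where f = "(+)"] sum.cong) (simp_all add: choose)
  also have "\<dots> = 0"
    by (simp only: bernoulli_m sum_distrib_left [symmetric])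
  finally show ?thesis .
qed

definition bernoulli_fps :: "'a :: real_field \<Rightarrow> 'a fps" where
  "bernoulli_fps c = Abs_fps (\<lambda>j. of_real (bernoulli_num j) * c ^ j / fact j)"

lemma bernoulli_fps_times_exp_minus_1:
  "bernoulli_fps c * (fps_exp c - 1) = fps_const c * fps_X"
proof (rule fps_ext)
  fix k :: nat
  have summand: "of_real (bernoulli_num i) * c ^ i / fact i * (c ^ (k - i) / fact (k - i))
      = c ^ k / fact k * of_real (real (k choose i) * bernoulli_num i)" if "i \<le> k" for i
  proof -
    have "c ^ i * c ^ (k - i) = c ^ k" using that by (simp flip: power_add)
    moreover have "(of_nat (k choose i) :: 'a) = fact k / (fact i * fact (k - i))"
      using binomial_fact[OF that] by (simp add: of_real_def)
    ultimately show ?thesis by (simp add: field_simps)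
  qed
  have "(bernoulli_fps c * (fps_exp c - 1)) $ k
      = (\<Sum>i<k. of_real (bernoulli_num i) * c ^ i / fact i * (c ^ (k - i) / fact (k - i)))"
    unfolding fps_mult_nth bernoulli_fps_def
    by (rule sum.mono_neutral_cong_right) auto
  also have "\<dots> = c ^ k / fact k * of_real (\<Sum>i<k. real (k choose i) * bernoulli_num i)"
    unfolding sum_distrib_left of_real_sum by (rule sum.cong [OF refl]) (rule summand, simp)
  also have "\<dots> = (fps_const c * fps_X) $ k"
    using sum_binomial_bernoulli_num[of k] by (cases "k \<le> 1") (auto simp: le_Suc_eq)
  finally show "(bernoulli_fps c * (fps_exp c - 1)) $ k = (fps_const c * fps_X) $ k" .
qed

lemma bernoulli_fps_diff:
  "bernoulli_fps c - bernoulli_fps d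
    = fps_X * Abs_fps (\<lambda>i. of_real (bernoulli_num (Suc i)) * (c ^ Suc i - d ^ Suc i) / fact (Suc i))"
proof (rule fps_ext)
  fix i
  show "(bernoulli_fps c - bernoulli_fps d) $ i
    = (fps_X * Abs_fps (\<lambda>i. of_real (bernoulli_num (Suc i)) * (c ^ Suc i - d ^ Suc i) / fact (Suc i))) $ i"
    by (cases i) (simp_all add: bernoulli_fps_def right_diff_distrib diff_divide_distrib del: fact_Suc)
qed

text \<open>Since \<open>B(t) = t/(e\<^sup>t - 1)\<close>, we get \<open>B(-t) = t e\<^sup>t/(e\<^sup>t - 1) = B(t) + t\<close>: apart from
  \<open>B\<^sub>1\<close>, the series is even.\<close>
lemma bernoulli_num_odd:
  assumes "odd j" "j \<ge> 3"
  shows "bernoulli_num j = 0"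
proof -
  define E where "E = fps_exp (1::real)"
  have "fps_exp (-1) * E = 1" by (simp add: E_def flip: fps_exp_add_mult)
  then have "bernoulli_fps (-1) * (E - 1) = - (bernoulli_fps (-1) * (fps_exp (-1) - 1)) * E"
    by (simp add: algebra_simps)
  also have "\<dots> = fps_X * E"
    using bernoulli_fps_times_exp_minus_1[of "-1::real"] by (simp only: fps_const_neg [symmetric] fps_const_1_eq_1) simp
  also have "\<dots> = (bernoulli_fps 1 + fps_X) * (E - 1)"
    using bernoulli_fps_times_exp_minus_1[of "1::real"] by (simp add: E_def algebra_simps)
  finally have "bernoulli_fps (-1) * (E - 1) = (bernoulli_fps 1 + fps_X) * (E - 1)" .
  moreover have "E - 1 \<noteq> 0"
    using arg_cong[of _ _ "\<lambda>f. f $ 1"] by (force simp: E_def)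
  ultimately have "bernoulli_fps (-1::real) = bernoulli_fps 1 + fps_X" by simp
  from arg_cong[OF this, of "\<lambda>f. f $ j"] show ?thesis
    using assms by (simp add: bernoulli_fps_def)
qed

section \<open>Power series and polynomials\<close>

lemma fps_deriv_prod:
  fixes f :: "'b \<Rightarrow> 'a :: field fps"
  assumes "finite A" "\<And>a. a \<in> A \<Longrightarrow> f a $ 0 \<noteq> 0"
  shows "fps_deriv (\<Prod>a\<in>A. f a) = (\<Sum>a\<in>A. fps_deriv (f a) * inverse (f a)) * (\<Prod>a\<in>A. f a)"
  using assms
proof (induction A rule: finite_induct)
  case (insert x A)
  have "inverse (f x) * f x = 1" using insert.prems by (intro inverse_mult_eq_1) auto
  with insert show ?case by (simp add: algebra_simps)
qed simp

text \<open>The power series \<open>p(e\<^sup>t)\<close>; it is written as \<open>p(1 + x)\<close> at \<open>x = e\<^sup>t - 1\<close> because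
  composition requires an inner series without constant term.\<close>
definition fps_poly_exp :: "'a :: field_char_0 poly \<Rightarrow> 'a fps" where
  "fps_poly_exp p = fps_of_poly (pcompose p [:1, 1:]) oo (fps_exp 1 - 1)"

lemma fps_poly_exp_1 [simp]: "fps_poly_exp 1 = 1"
  by (simp add: fps_poly_exp_def pcompose_1)

lemma fps_poly_exp_mult: "fps_poly_exp (p * q) = fps_poly_exp p * fps_poly_exp q"
  by (simp add: fps_poly_exp_def pcompose_mult fps_of_poly_mult fps_compose_mult_distrib)

lemma fps_poly_exp_prod: "fps_poly_exp (\<Prod>a\<in>A. f a) = (\<Prod>a\<in>A. fps_poly_exp (f a))"
  by (simp add: fps_poly_exp_def pcompose_prod fps_of_poly_prod fps_compose_prod_distrib)

lemma fps_poly_exp_diff: "fps_poly_exp (p - q) = fps_poly_exp p - fps_poly_exp q"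
  by (simp add: fps_poly_exp_def pcompose_diff fps_of_poly_diff fps_compose_sub_distrib)

lemma fps_poly_exp_power: "fps_poly_exp (p ^ n) = fps_poly_exp p ^ n"
  by (induction n) (simp_all add: fps_poly_exp_mult)

lemma fps_poly_exp_linear: "fps_poly_exp [:- c, 1:] = fps_exp 1 - fps_const c"
proof -
  have "pcompose [:- c, 1:] [:1, 1:] = [:1 - c, 1:]" by (simp add: pcompose_pCons)
  then have "fps_of_poly (pcompose [:- c, 1:] [:1, 1:]) = fps_const (1 - c) + fps_X"
    by (simp add: fps_of_poly_linear add.commute)
  then have "fps_poly_exp [:- c, 1:] = fps_const (1 - c) + (fps_exp 1 - 1)"
    by (simp only: fps_poly_exp_def fps_compose_add_distrib) simp
  then show ?thesis by (simp flip: fps_const_1_eq_1 fps_const_sub)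
qed

lemma fps_poly_exp_monom: "fps_poly_exp (Polynomial.monom 1 N) = fps_exp (of_nat N)"
proof -
  have "Polynomial.monom 1 N = [:0, 1:] ^ N" by (simp add: monom_altdef)
  then have "fps_poly_exp (Polynomial.monom 1 N) = fps_poly_exp [:0, 1:] ^ N"
    unfolding fps_poly_exp_power [symmetric] by (rule arg_cong)
  also have "fps_poly_exp [:0, 1:] = fps_exp 1"
    using fps_poly_exp_linear[of 0] by simp
  finally show ?thesis by (simp add: fps_exp_power_mult)
qed

lemma fps_poly_exp_nth_0: "fps_poly_exp p $ 0 = poly p 1"
  by (simp add: fps_poly_exp_def poly_0_coeff_0 [symmetric] poly_pcompose)

lemma fps_poly_exp_nth:
  "fps_poly_exp p $ m = (\<Sum>i=0..m. Polynomial.coeff (pcompose p [:1, 1:]) i * ((fps_exp 1 - 1) ^ i) $ m)"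
  by (simp add: fps_poly_exp_def fps_compose_nth)

lemma poly_higher_pderiv:
  fixes p :: "'a :: {idom, semiring_char_0} poly"
  shows "poly ((pderiv ^^ k) p) a = fact k * Polynomial.coeff (pcompose p [:a, 1:]) k"
proof -
  have "(pderiv ^^ k) (pcompose p [:a, 1:]) = pcompose ((pderiv ^^ k) p) [:a, 1:]"
    by (induction k) (simp_all add: pderiv_pcompose pderiv_pCons)
  then have "poly ((pderiv ^^ k) p) a = Polynomial.coeff ((pderiv ^^ k) (pcompose p [:a, 1:])) 0"
    by (simp add: poly_pcompose poly_0_coeff_0 [symmetric])
  then show ?thesis by (simp add: coeff_higher_pderiv pochhammer_fact)
qed

section \<open>Roots of unity\<close>

lemma prod_roots_of_unity:
  assumes "N > 0"
  shows "(\<Prod>l<N. [:- cis (2 * pi * real l / real N), 1:]) = Polynomial.monom 1 N - 1"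
proof -
  define p :: "complex poly" where "p = Polynomial.monom 1 N - 1"
  have poly_p: "poly p z = z ^ N - 1" for z by (simp add: p_def poly_monom)
  have "degree p = N"
    unfolding p_def using assms
    by (intro antisym degree_diff_le le_degree) (auto simp: degree_monom_le)
  then have "lead_coeff p = 1" using assms by (simp add: p_def)
  moreover have "rsquarefree p"
    unfolding rsquarefree_roots
  proof (intro allI notI)
    fix z assume z: "poly p z = 0 \<and> poly (pderiv p) z = 0"
    moreover have "poly (pderiv p) z = of_nat N * z ^ (N - 1)"
      by (simp add: p_def pderiv_monom poly_monom pderiv_diff)
    ultimately have "z = 0" using assms by simp
    with z poly_p assms show False by (simp add: power_0_left)
  qed
  ultimately have "(\<Prod>z | z ^ N = 1. [:- z, 1:]) = p"
    using complex_poly_decompose_rsquarefree[of p] poly_p by simp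
  moreover have "(\<Prod>l<N. [:- cis (2 * pi * real l / real N), 1:]) = (\<Prod>z | z ^ N = 1. [:- z, 1:])"
    by (rule prod.reindex_bij_betw[OF Complex.bij_betw_roots_unity[OF assms]])
  ultimately show ?thesis by (simp add: p_def)
qed

lemma cis_root_of_unity_neq_1:
  assumes "0 < l" "l < N"
  shows "cis (2 * pi * real l / real N) \<noteq> 1"
proof
  assume "cis (2 * pi * real l / real N) = 1"
  then have "cis (2 * pi * real l / real N) = cis (2 * pi * real 0 / real N)" by simp
  moreover have "inj_on (\<lambda>k. cis (2 * pi * real k / real N)) {..<N}"
    using Complex.bij_betw_roots_unity[of N] assms by (simp add: bij_betw_def)
  ultimately have "l = 0" using assms by (auto dest: inj_onD[of _ _ l 0])
  with assms show False by simp
qed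

lemma prod_exp_minus_roots_of_unity:
  assumes "N > 0"
  shows "(\<Prod>l\<in>{0<..<N}. fps_exp 1 - fps_const (cis (2 * pi * real l / real N))) * (fps_exp 1 - 1)
    = fps_exp (of_nat N) - 1"
proof -
  have "(\<Prod>l<N. fps_exp 1 - fps_const (cis (2 * pi * real l / real N))) = fps_exp (of_nat N) - 1"
    using arg_cong[OF prod_roots_of_unity[OF assms], of fps_poly_exp]
    by (simp add: fps_poly_exp_prod fps_poly_exp_linear fps_poly_exp_diff fps_poly_exp_monom)
  moreover have "{..<N} = insert 0 {0<..<N}" using assms by auto
  ultimately show ?thesis by (simp add: mult.commute)
qed

text \<open>Logarithmic differentiation of \<open>prod_exp_minus_roots_of_unity\<close>, multiplied by \<open>t\<close> so that
  \<open>t/(e\<^sup>c\<^sup>t - 1)\<close> becomes the Bernoulli series; the factor \<open>e\<^sup>t - 1\<close> is kept apart because it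
  is not invertible.\<close>
lemma fps_X_times_sum_exp_div_exp_minus_roots_of_unity:
  assumes "N > 0"
  shows "fps_X * (\<Sum>l\<in>{0<..<N}. fps_exp 1 * inverse (fps_exp 1 - fps_const (cis (2 * pi * real l / real N))))
    = bernoulli_fps (of_nat N) * fps_exp (of_nat N) - bernoulli_fps 1 * fps_exp 1"
    (is "fps_X * ?G = _")
proof -
  define E where "E = fps_exp (1::complex)"
  define F where "F = fps_exp (of_nat N :: complex)"
  define Q where "Q = (\<Prod>l\<in>{0<..<N}. E - fps_const (cis (2 * pi * real l / real N)))"
  have Q: "Q * (E - 1) = F - 1"
    using prod_exp_minus_roots_of_unity[OF assms] by (simp add: Q_def E_def F_def)
  have BN: "bernoulli_fps (of_nat N) * (F - 1) = fps_const (of_nat N) * fps_X"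
    by (simp add: F_def bernoulli_fps_times_exp_minus_1)
  have B1: "bernoulli_fps 1 * (E - 1) = fps_X"
    using bernoulli_fps_times_exp_minus_1[of 1] by (simp add: E_def)
  have "fps_deriv Q = ?G * Q"
    unfolding Q_def using cis_root_of_unity_neq_1[of _ N]
    by (subst fps_deriv_prod) (auto simp: E_def)
  then have "fps_deriv (Q * (E - 1)) = ?G * Q * (E - 1) + Q * E"
    by (simp add: E_def)
  moreover have "fps_deriv (Q * (E - 1)) = fps_const (of_nat N) * F"
    unfolding Q by (simp add: F_def)
  ultimately have "?G * Q * (E - 1) + Q * E = fps_const (of_nat N) * F" by simp
  then have "(F - 1) * (fps_X * ?G) = fps_X * (fps_const (of_nat N) * F - Q * E)"
    by (simp add: Q [symmetric] eq_diff_eq mult_ac)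
  also have "\<dots> = bernoulli_fps (of_nat N) * (F - 1) * F - bernoulli_fps 1 * (E - 1) * (Q * E)"
    unfolding B1 BN by (simp add: algebra_simps)
  also have "\<dots> = (F - 1) * (bernoulli_fps (of_nat N) * F) - bernoulli_fps 1 * E * (Q * (E - 1))"
    by (simp only: mult_ac)
  also have "\<dots> = (F - 1) * (bernoulli_fps (of_nat N) * F - bernoulli_fps 1 * E)"
    by (simp only: Q) (simp add: algebra_simps)
  finally have "(F - 1) * (fps_X * ?G) = (F - 1) * (bernoulli_fps (of_nat N) * F - bernoulli_fps 1 * E)" .
  moreover have "F - 1 \<noteq> 0"
    using assms arg_cong[of _ _ "\<lambda>f. f $ 1"] by (force simp: F_def)
  ultimately show ?thesis by (simp add: E_def F_def)
qed

lemma sum_exp_div_exp_minus_roots_of_unity: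
  assumes "N > 0"
  shows "(\<Sum>l\<in>{0<..<N}. fps_exp 1 * inverse (fps_exp 1 - fps_const (cis (2 * pi * real l / real N))))
    = fps_const (of_nat N - 1)
      + Abs_fps (\<lambda>i. of_real (bernoulli_num (Suc i)) * (of_nat N ^ Suc i - 1) / fact (Suc i))"
    (is "?G = _ + ?Y")
proof -
  have "bernoulli_fps c * fps_exp c = bernoulli_fps c + fps_const c * fps_X" for c :: complex
    using bernoulli_fps_times_exp_minus_1[of c] by (simp add: algebra_simps)
  then have "fps_X * ?G = (bernoulli_fps (of_nat N) - bernoulli_fps 1) + fps_X * fps_const (of_nat N - 1)"
    using fps_X_times_sum_exp_div_exp_minus_roots_of_unity[OF assms]
    by (simp add: algebra_simps flip: fps_const_sub fps_const_1_eq_1)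
  also have "\<dots> = fps_X * (fps_const (of_nat N - 1) + ?Y)"
    unfolding bernoulli_fps_diff power_one by (simp add: algebra_simps)
  finally show ?thesis by simp
qed

section \<open>Inclusion-exclusion over prime factors\<close>

lemma sum_Pow_minus_one_power_card:
  assumes "finite T"
  shows "(\<Sum>S\<in>Pow T. (- 1 :: 'a :: comm_ring_1) ^ card S) = (if T = {} then 1 else 0)"
proof -
  have "(\<Sum>S\<in>Pow T. (- 1 :: 'a) ^ card S) = 0 ^ card T"
    using prod_diff_conv_sum[OF assms, of "\<lambda>_. 1 :: 'a" "\<lambda>_. 1"] by simp
  then show ?thesis using assms by (simp add: power_0_left)
qed

lemma prod_primes_dvd_iff:
  fixes S :: "nat set"
  assumes "finite S" "\<And>p. p \<in> S \<Longrightarrow> prime p"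
  shows "(\<Prod>p\<in>S. p) dvd j \<longleftrightarrow> (\<forall>p\<in>S. p dvd j)"
  using assms
proof (induction S rule: finite_induct)
  case (insert q S)
  have q: "prime q" and S: "\<And>p. p \<in> S \<Longrightarrow> prime p" using insert.prems by auto
  have "\<not> q dvd (\<Prod>p\<in>S. p)"
  proof
    assume "q dvd (\<Prod>p\<in>S. p)"
    then obtain p where "p \<in> S" "q dvd p" using prime_dvd_prod_iff[OF insert.hyps(1) q] by auto
    with q S insert.hyps(2) show False using primes_dvd_imp_eq by blast
  qed
  with q have "coprime q (\<Prod>p\<in>S. p)" by (rule prime_imp_coprime)
  moreover have "(\<Prod>p\<in>insert q S. p) = q * (\<Prod>p\<in>S. p)" using insert.hyps by simp
  ultimately show ?case
    using insert.IH[OF S] by (auto intro: divides_mult dest: dvd_mult_left dvd_mult_right)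
qed simp

lemma coprime_iff_prime_factors_not_dvd:
  fixes j n :: nat
  assumes "n > 0"
  shows "coprime j n \<longleftrightarrow> (\<forall>p\<in>prime_factors n. \<not> p dvd j)"
proof
  assume "coprime j n"
  then show "\<forall>p\<in>prime_factors n. \<not> p dvd j"
    by (auto simp: in_prime_factors_iff dest: coprime_common_divisor not_prime_unit)
next
  assume no_factor: "\<forall>p\<in>prime_factors n. \<not> p dvd j"
  show "coprime j n"
  proof (rule coprimeI)
    fix d assume d: "d dvd j" "d dvd n"
    show "is_unit d"
    proof (rule ccontr)
      assume "\<not> is_unit d"
      then obtain p where "prime p" "p dvd d" using prime_factor_nat[of d] by auto
      with d assms have "p \<in> prime_factors n" "p dvd j"
        by (auto simp: in_prime_factors_iff intro: dvd_trans)
      with no_factor show False by blast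
    qed
  qed
qed

lemma sum_coprime_inclusion_exclusion:
  fixes f :: "nat \<Rightarrow> 'a :: comm_ring_1"
  assumes "finite A" "n > 0"
  shows "(\<Sum>j\<in>{j\<in>A. coprime j n}. f j)
    = (\<Sum>S\<in>Pow (prime_factors n). (- 1) ^ card S * (\<Sum>j\<in>{j\<in>A. (\<Prod>p\<in>S. p) dvd j}. f j))"
proof -
  define P where "P = prime_factors n"
  have indicator: "(\<Sum>S\<in>{S\<in>Pow P. (\<Prod>p\<in>S. p) dvd j}. (- 1 :: 'a) ^ card S)
      = (if coprime j n then 1 else 0)" for j
  proof -
    have "(\<Prod>p\<in>S. p) dvd j \<longleftrightarrow> S \<subseteq> {p\<in>P. p dvd j}" if "S \<subseteq> P" for S
      using that prod_primes_dvd_iff[of S j] finite_subset[OF that]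
      by (auto simp: P_def in_prime_factors_iff)
    then have "{S\<in>Pow P. (\<Prod>p\<in>S. p) dvd j} = Pow {p\<in>P. p dvd j}" by auto
    then show ?thesis
      using sum_Pow_minus_one_power_card[of "{p\<in>P. p dvd j}"]
      by (auto simp: P_def coprime_iff_prime_factors_not_dvd[OF assms(2)])
  qed
  have "(\<Sum>j\<in>{j\<in>A. coprime j n}. f j) = (\<Sum>j\<in>A. if coprime j n then f j else 0)"
    using assms(1) by (simp add: sum.inter_filter)
  also have "\<dots> = (\<Sum>j\<in>A. \<Sum>S\<in>{S\<in>Pow P. (\<Prod>p\<in>S. p) dvd j}. (- 1) ^ card S * f j)"
    by (intro sum.cong refl) (unfold sum_distrib_right [symmetric] indicator, simp)
  also have "\<dots> = (\<Sum>S\<in>Pow P. \<Sum>j\<in>{j\<in>A. (\<Prod>p\<in>S. p) dvd j}. (- 1) ^ card S * f j)"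
    using assms(1) by (intro sum.swap_restrict) (simp_all add: P_def)
  finally show ?thesis unfolding P_def sum_distrib_left .
qed

lemma sum_multiples:
  fixes f :: "nat \<Rightarrow> 'a :: comm_monoid_add"
  assumes "m dvd n" "m > 0"
  shows "(\<Sum>j\<in>{j\<in>{0<..<n}. m dvd j}. f j) = (\<Sum>l\<in>{0<..<n div m}. f (m * l))"
proof -
  have "{j\<in>{0<..<n}. m dvd j} = (\<lambda>l. m * l) ` {0<..<n div m}"
    using assms by (auto elim!: dvdE simp: image_iff)
  moreover have "inj_on (\<lambda>l. m * l) {0<..<n div m}"
    using assms by (auto intro: inj_onI)
  ultimately show ?thesis by (simp add: sum.reindex)
qed

lemma prod_prime_factors_subset_dvd:
  fixes n :: nat
  assumes "S \<subseteq> prime_factors n" "n > 0"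
  shows "(\<Prod>p\<in>S. p) dvd n"
  using assms by (subst prod_primes_dvd_iff) (auto intro: finite_subset simp: in_prime_factors_iff)

lemma jordan_totient_inclusion_exclusion:
  assumes "n > 0"
  shows "jordan_totient r n
    = (\<Sum>S\<in>Pow (prime_factors n). (- 1) ^ card S * real (n div (\<Prod>p\<in>S. p)) ^ r)"
proof -
  have "jordan_totient r n
      = (\<Sum>S\<in>Pow (prime_factors n). (- 1) ^ card S * (real n ^ r * (\<Prod>p\<in>S. 1 / real p ^ r)))"
    using prod_diff_conv_sum[of "prime_factors n" "\<lambda>_. 1" "\<lambda>p. 1 / real p ^ r"]
    by (simp add: jordan_totient_def sum_distrib_left mult_ac)
  also have "\<dots> = (\<Sum>S\<in>Pow (prime_factors n). (- 1) ^ card S * real (n div (\<Prod>p\<in>S. p)) ^ r)"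
  proof (intro sum.cong refl arg_cong[where f = "(*) _"])
    fix S assume "S \<in> Pow (prime_factors n)"
    with prod_prime_factors_subset_dvd[OF _ assms] show
      "real n ^ r * (\<Prod>p\<in>S. 1 / real p ^ r) = real (n div (\<Prod>p\<in>S. p)) ^ r"
      by (simp add: real_of_nat_div power_divide prod_power_distrib prod_dividef)
  qed
  finally show ?thesis .
qed

lemma jordan_totient_factor_bounds:
  assumes "p \<in> prime_factors n"
  shows "0 \<le> 1 - 1 / real p ^ r" "1 - 1 / real p ^ r \<le> 1"
proof -
  have "p > 0" using assms by (simp add: in_prime_factors_iff prime_gt_0_nat)
  then have "1 \<le> real p ^ r" by (intro one_le_power) simp
  with \<open>p > 0\<close> show "0 \<le> 1 - 1 / real p ^ r" "1 - 1 / real p ^ r \<le> 1"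
    by (simp_all add: divide_le_eq_1)
qed

lemma jordan_totient_nonneg: "jordan_totient r n \<ge> 0"
  unfolding jordan_totient_def
  by (intro mult_nonneg_nonneg prod_nonneg jordan_totient_factor_bounds) simp_all

lemma jordan_totient_le: "jordan_totient r n \<le> real n ^ r"
  unfolding jordan_totient_def
  by (intro mult_left_le prod_le_1 conjI jordan_totient_factor_bounds) simp_all

section \<open>Coefficients of exponentials\<close>

lemma partition_tuples_iff:
  assumes "k \<le> K"
  shows "l \<in> partition_tuples k \<longleftrightarrow> (\<forall>i. i \<notin> {1..K} \<longrightarrow> l i = 0) \<and> (\<Sum>i=1..K. i * l i) = k"
proof
  assume l: "l \<in> partition_tuples k"
  then have "(\<Sum>i=1..K. i * l i) = (\<Sum>i=1..k. i * l i)"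
    using assms by (intro sum.mono_neutral_right) (auto simp: partition_tuples_def)
  with l assms show "(\<forall>i. i \<notin> {1..K} \<longrightarrow> l i = 0) \<and> (\<Sum>i=1..K. i * l i) = k"
    by (auto simp: partition_tuples_def)
next
  assume l: "(\<forall>i. i \<notin> {1..K} \<longrightarrow> l i = 0) \<and> (\<Sum>i=1..K. i * l i) = k"
  have support: "l i = 0" if "i \<notin> {1..k}" for i
  proof (cases "i \<in> {1..K}")
    case True
    then have "i * l i \<le> (\<Sum>j=1..K. j * l j)" by (intro member_le_sum) auto
    with l that True show ?thesis by (cases "l i") auto
  qed (use l in auto)
  then have "(\<Sum>i=1..K. i * l i) = (\<Sum>i=1..k. i * l i)"
    using assms by (intro sum.mono_neutral_right) auto
  with l support show "l \<in> partition_tuples k"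
    by (simp add: partition_tuples_def)
qed

lemma partition_tuples_finite: "finite (partition_tuples k)"
proof (rule finite_subset)
  show "partition_tuples k \<subseteq> {l. \<forall>i. (i \<in> {1..k} \<longrightarrow> l i \<in> {0..k}) \<and> (i \<notin> {1..k} \<longrightarrow> l i = 0)}"
  proof safe
    fix l i assume l: "l \<in> partition_tuples k" and i: "i \<in> {1..k}"
    have "l i \<le> i * l i" using i by simp
    also have "\<dots> \<le> (\<Sum>j=1..k. j * l j)" using i by (intro member_le_sum) auto
    finally show "l i \<in> {0..k}" using l by (simp add: partition_tuples_def)
  qed (auto simp: partition_tuples_def)
qed (intro finite_set_of_finite_funs; simp)

lemma sum_weights_fun_upd:
  fixes l :: "nat \<Rightarrow> nat"
  assumes "i \<in> {1..K}"
  shows "(\<Sum>j=1..K. j * (l(i := v)) j) + i * l i = (\<Sum>j=1..K. j * l j) + i * v"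
proof -
  have "(\<Sum>j\<in>{1..K}-{i}. j * (l(i := v)) j) = (\<Sum>j\<in>{1..K}-{i}. j * l j)"
    by (intro sum.cong) auto
  moreover have "(\<Sum>j=1..K. j * (l(i := v)) j) = i * v + (\<Sum>j\<in>{1..K}-{i}. j * (l(i := v)) j)"
    using assms by (subst sum.remove[of _ i]) auto
  moreover have "(\<Sum>j=1..K. j * l j) = i * l i + (\<Sum>j\<in>{1..K}-{i}. j * l j)"
    using assms by (subst sum.remove[of _ i]) auto
  ultimately show ?thesis by simp
qed

lemma prod_powers_fun_upd:
  fixes y :: "nat \<Rightarrow> real"
  assumes "i \<in> {1..K}" "l i = Suc v"
  shows "real (l i) * (\<Prod>j=1..K. y j ^ l j / fact (l j))
    = y i * (\<Prod>j=1..K. y j ^ (l(i := v)) j / fact ((l(i := v)) j))"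
proof -
  define R where "R = (\<Prod>j\<in>{1..K}-{i}. y j ^ l j / fact (l j))"
  have "(\<Prod>j=1..K. y j ^ (l(i := v)) j / fact ((l(i := v)) j)) = y i ^ v / fact v * R"
    using assms unfolding R_def by (subst prod.remove[of _ i]) (auto intro!: prod.cong)
  moreover have "(\<Prod>j=1..K. y j ^ l j / fact (l j)) = y i ^ Suc v / fact (Suc v) * R"
    using assms unfolding R_def by (subst prod.remove[of _ i]) auto
  moreover have "real (Suc v) * (y i ^ Suc v / fact (Suc v)) = y i * (y i ^ v / fact v)"
    by (simp add: field_simps del: of_nat_Suc)
  ultimately show ?thesis using assms by (simp add: mult.assoc)
qed

lemma partition_tuples_fun_upd_iff:
  assumes "i \<in> {1..k}" "l i = Suc v"
  shows "l \<in> partition_tuples k \<longleftrightarrow> l(i := v) \<in> partition_tuples (k - i)"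
proof -
  have "(\<Sum>j=1..k. j * (l(i := v)) j) + i = (\<Sum>j=1..k. j * l j)"
    using sum_weights_fun_upd[OF assms(1), of l v] assms(2) by simp
  moreover have "(\<forall>j. j \<notin> {1..k} \<longrightarrow> (l(i := v)) j = 0) \<longleftrightarrow> (\<forall>j. j \<notin> {1..k} \<longrightarrow> l j = 0)"
    using assms(1) by auto
  ultimately show ?thesis
    using assms(1) by (auto simp: partition_tuples_iff[of k k] partition_tuples_iff[of "k - i" k])
qed

lemma prod_powers_partition_tuples:
  fixes y :: "nat \<Rightarrow> real"
  assumes "l \<in> partition_tuples k" "k \<le> K"
  shows "(\<Prod>j=1..K. y j ^ l j / fact (l j)) = (\<Prod>j=1..k. y j ^ l j / fact (l j))"
  using assms by (intro prod.mono_neutral_right) (auto simp: partition_tuples_def)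

text \<open>The coefficient of \<open>t\<^sup>k\<close> in \<open>exp (\<Sum>\<^sub>i y\<^sub>i t\<^sup>i)\<close>.\<close>
definition exp_coeff :: "(nat \<Rightarrow> real) \<Rightarrow> nat \<Rightarrow> real" where
  "exp_coeff y k = (\<Sum>l\<in>partition_tuples k. \<Prod>j=1..k. y j ^ l j / fact (l j))"

lemma exp_coeff_0 [simp]: "exp_coeff y 0 = 1"
proof -
  have "partition_tuples 0 = {\<lambda>_. 0}" by (auto simp: partition_tuples_def)
  then show ?thesis by (simp add: exp_coeff_def)
qed

lemma sum_partition_tuples_times_part:
  assumes "i \<in> {1..k}"
  shows "(\<Sum>l\<in>partition_tuples k. real (l i) * (\<Prod>j=1..k. y j ^ l j / fact (l j)))
    = y i * exp_coeff y (k - i)"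
proof -
  define w where "w l = (\<Prod>j=1..k. y j ^ l j / fact (l j))" for l
  have "(\<Sum>l\<in>partition_tuples k. real (l i) * w l) = (\<Sum>l\<in>{l\<in>partition_tuples k. 0 < l i}. real (l i) * w l)"
    by (rule sum.mono_neutral_right) (auto simp: partition_tuples_finite)
  also have "\<dots> = (\<Sum>m\<in>partition_tuples (k - i). y i * w m)"
  proof (rule sum.reindex_bij_witness[where i = "\<lambda>m. m(i := Suc (m i))" and j = "\<lambda>l. l(i := l i - 1)"])
    fix l assume l: "l \<in> {l\<in>partition_tuples k. 0 < l i}"
    then have li: "l i = Suc (l i - 1)" by simp
    show "(l(i := l i - 1))(i := Suc ((l(i := l i - 1)) i)) = l" using li by auto
    show "l(i := l i - 1) \<in> partition_tuples (k - i)"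
      using l partition_tuples_fun_upd_iff[where l = l and v = "l i - 1", OF assms li] by simp
    show "y i * w (l(i := l i - 1)) = real (l i) * w l"
      using prod_powers_fun_upd[where l = l and v = "l i - 1", OF assms li] by (simp add: w_def)
  next
    fix m assume m: "m \<in> partition_tuples (k - i)"
    show "(m(i := Suc (m i)))(i := (m(i := Suc (m i))) i - 1) = m" by auto
    show "m(i := Suc (m i)) \<in> {l\<in>partition_tuples k. 0 < l i}"
      using m partition_tuples_fun_upd_iff[OF assms, of "m(i := Suc (m i))" "m i"] by simp
  qed
  also have "\<dots> = y i * exp_coeff y (k - i)"
    unfolding exp_coeff_def sum_distrib_left w_def
    by (intro sum.cong refl arg_cong[where f = "(*) _"] prod_powers_partition_tuples) auto
  finally show ?thesis by (simp add: w_def)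
qed

lemma exp_coeff_recurrence:
  "real k * exp_coeff y k = (\<Sum>i=1..k. real i * y i * exp_coeff y (k - i))"
proof -
  define w where "w l = (\<Prod>j=1..k. y j ^ l j / fact (l j))" for l
  have "real k * exp_coeff y k = (\<Sum>l\<in>partition_tuples k. (\<Sum>i=1..k. real i * real (l i)) * w l)"
    unfolding exp_coeff_def sum_distrib_left w_def
    by (intro sum.cong refl) (simp add: partition_tuples_def flip: of_nat_mult of_nat_sum)
  also have "\<dots> = (\<Sum>i=1..k. real i * (\<Sum>l\<in>partition_tuples k. real (l i) * w l))"
    by (simp add: sum_distrib_left sum_distrib_right mult_ac sum.swap[of _ "partition_tuples k"])
  also have "\<dots> = (\<Sum>i=1..k. real i * y i * exp_coeff y (k - i))"
  proof (intro sum.cong refl)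
    fix i assume "i \<in> {1..k}"
    then show "real i * (\<Sum>l\<in>partition_tuples k. real (l i) * w l) = real i * y i * exp_coeff y (k - i)"
      using sum_partition_tuples_times_part[of i k y] by (simp add: w_def)
  qed
  finally show ?thesis .
qed

lemma fps_nth_eq_exp_coeff:
  fixes A :: "'a :: real_field fps"
  assumes "fps_deriv A = Abs_fps (\<lambda>i. of_real (real (Suc i) * y (Suc i))) * A"
  shows "A $ m = A $ 0 * of_real (exp_coeff y m)"
proof (induction m rule: less_induct)
  case (less m)
  show ?case
  proof (cases m)
    case (Suc k)
    have "of_nat (Suc k) * A $ Suc k = (\<Sum>i=0..k. of_real (real (Suc i) * y (Suc i)) * A $ (k - i))"
      using arg_cong[OF assms, of "\<lambda>f. f $ k"] by (simp add: fps_mult_nth)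
    also have "\<dots> = A $ 0 * of_real (\<Sum>i=0..k. real (Suc i) * y (Suc i) * exp_coeff y (k - i))"
      unfolding of_real_sum sum_distrib_left
    proof (intro sum.cong refl)
      fix i assume "i \<in> {0..k}"
      then have "A $ (k - i) = A $ 0 * of_real (exp_coeff y (k - i))"
        using Suc by (intro less.IH) simp
      then show "of_real (real (Suc i) * y (Suc i)) * A $ (k - i)
          = A $ 0 * of_real (real (Suc i) * y (Suc i) * exp_coeff y (k - i))"
        by (simp add: mult_ac)
    qed
    also have "(\<Sum>i=0..k. real (Suc i) * y (Suc i) * exp_coeff y (k - i)) = real (Suc k) * exp_coeff y (Suc k)"
      unfolding exp_coeff_recurrence[of "Suc k"] One_nat_def sum.shift_bounds_cl_Suc_ivl by simp
    finally have "of_nat (Suc k) * A $ Suc k = of_nat (Suc k) * (A $ 0 * of_real (exp_coeff y (Suc k)))"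
      by (simp add: mult_ac)
    then show ?thesis using Suc by (simp del: of_nat_Suc)
  qed simp
qed

lemma abs_exp_coeff_le:
  fixes x :: real
  assumes "\<And>i. \<bar>y i\<bar> \<le> c i * x ^ i" "x \<ge> 0"
  shows "\<bar>exp_coeff y m\<bar> \<le> exp_coeff c m * x ^ m"
proof -
  have "\<bar>\<Prod>j=1..m. y j ^ l j / fact (l j)\<bar> \<le> (\<Prod>j=1..m. c j ^ l j / fact (l j)) * x ^ m"
    if "l \<in> partition_tuples m" for l
  proof -
    have "\<bar>\<Prod>j=1..m. y j ^ l j / fact (l j)\<bar> = (\<Prod>j=1..m. \<bar>y j\<bar> ^ l j / fact (l j))"
      by (simp add: abs_prod power_abs)
    also have "\<dots> \<le> (\<Prod>j=1..m. (c j * x ^ j) ^ l j / fact (l j))"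
      by (intro prod_mono conjI divide_right_mono power_mono) (simp_all add: assms)
    also have "\<dots> = (\<Prod>j=1..m. c j ^ l j / fact (l j)) * (\<Prod>j=1..m. x ^ (j * l j))"
      by (simp add: power_mult_distrib power_mult prod.distrib [symmetric])
    also have "(\<Prod>j=1..m. x ^ (j * l j)) = x ^ m"
      using that by (simp add: power_sum [symmetric] partition_tuples_def)
    finally show ?thesis .
  qed
  then have "\<bar>exp_coeff y m\<bar> \<le> (\<Sum>l\<in>partition_tuples m. (\<Prod>j=1..m. c j ^ l j / fact (l j)) * x ^ m)"
    unfolding exp_coeff_def by (intro order_trans[OF sum_abs] sum_mono)
  then show ?thesis by (simp add: exp_coeff_def sum_distrib_right)
qed

section \<open>Unitriangular systems\<close>

lemma sum_bounded_by_powers: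
  fixes f :: "nat \<Rightarrow> 'b \<Rightarrow> 'a :: real_normed_div_algebra"
  assumes "\<And>i. i < m \<Longrightarrow> \<exists>C. \<forall>x\<in>I. norm (f i x) \<le> C * h x ^ i" "\<And>x. x \<in> I \<Longrightarrow> 1 \<le> h x"
  shows "\<exists>C. \<forall>x\<in>I. norm (\<Sum>i<m. f i x * s i) \<le> C * h x ^ (m - 1)"
  using assms(1)
proof (induction m)
  case 0
  show ?case by (intro exI[of _ 0]) simp
next
  case (Suc m)
  obtain C1 where C1: "\<forall>x\<in>I. norm (\<Sum>i<m. f i x * s i) \<le> C1 * h x ^ (m - 1)"
    using Suc by auto
  obtain C2 where C2: "\<forall>x\<in>I. norm (f m x) \<le> C2 * h x ^ m"
    using Suc.prems by blast
  have "norm (\<Sum>i<Suc m. f i x * s i) \<le> (\<bar>C1\<bar> + C2 * norm (s m)) * h x ^ m" if "x \<in> I" for x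
  proof -
    have "C1 * h x ^ (m - 1) \<le> \<bar>C1\<bar> * h x ^ m"
      using assms(2)[OF that] by (intro mult_mono power_increasing) auto
    moreover have "norm (f m x * s m) \<le> C2 * h x ^ m * norm (s m)"
      using C2 that by (simp add: norm_mult mult_right_mono)
    ultimately show ?thesis
      using C1[rule_format, OF that] norm_triangle_ineq[of "\<Sum>i<m. f i x * s i" "f m x * s m"]
      by (simp add: algebra_simps)
  qed
  then show ?case by auto
qed

lemma unitriangular_system_bound:
  fixes a b :: "'b \<Rightarrow> nat \<Rightarrow> 'a :: real_normed_field"
  assumes system: "\<And>x m. x \<in> I \<Longrightarrow> (\<Sum>i\<le>m. a x i * s m i) = b x m"
    and diagonal: "\<And>m. s m m = 1"
    and b_bound: "\<And>m. \<exists>C. \<forall>x\<in>I. norm (b x m) \<le> C * h x ^ m"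
    and h: "\<And>x. x \<in> I \<Longrightarrow> 1 \<le> h x"
  shows "\<exists>C. \<forall>x\<in>I. norm (a x m - b x m) \<le> C * h x ^ (m - 1)"
proof -
  have sum_eq: "a x m - b x m = - (\<Sum>i<m. a x i * s m i)" if "x \<in> I" for x m
  proof -
    have "(\<Sum>i<m. a x i * s m i) + a x m = b x m"
      using system[OF that, of m] by (simp add: lessThan_Suc_atMost [symmetric] diagonal)
    then show ?thesis by (auto simp: algebra_simps)
  qed
  have a_bound: "\<exists>C. \<forall>x\<in>I. norm (a x m) \<le> C * h x ^ m" for m
  proof (induction m rule: less_induct)
    case (less m)
    obtain C1 where C1: "\<forall>x\<in>I. norm (\<Sum>i<m. a x i * s m i) \<le> C1 * h x ^ (m - 1)"
      using sum_bounded_by_powers[of m I "\<lambda>i x. a x i" h "s m"] less h by blast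
    obtain C2 where C2: "\<forall>x\<in>I. norm (b x m) \<le> C2 * h x ^ m"
      using b_bound by blast
    have "norm (a x m) \<le> (C2 + \<bar>C1\<bar>) * h x ^ m" if "x \<in> I" for x
    proof -
      have "C1 * h x ^ (m - 1) \<le> \<bar>C1\<bar> * h x ^ m"
        using h[OF that] by (intro mult_mono power_increasing) auto
      moreover have "a x m = b x m - (\<Sum>i<m. a x i * s m i)"
        using sum_eq[OF that, of m] by (simp add: algebra_simps)
      then have "norm (a x m) \<le> norm (b x m) + norm (\<Sum>i<m. a x i * s m i)"
        by (simp only: norm_triangle_ineq4)
      ultimately show ?thesis
        using C1[rule_format, OF that] C2[rule_format, OF that] by (simp add: algebra_simps)
    qed
    then show ?case by blast
  qed
  then obtain C where "\<forall>x\<in>I. norm (\<Sum>i<m. a x i * s m i) \<le> C * h x ^ (m - 1)"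
    using sum_bounded_by_powers[of m I "\<lambda>i x. a x i" h "s m"] h by blast
  then show ?thesis by (auto simp: sum_eq)
qed

section \<open>Cyclotomic polynomials at \<open>e\<^sup>t\<close>\<close>

lemma cyclotomic_poly_altdef:
  assumes "n > 1"
  shows "cyclotomic_poly n = (\<Prod>j\<in>{j\<in>{0<..<n}. coprime j n}. [:- cis (2 * pi * real j / real n), 1:])"
proof -
  have "{j. 1 \<le> j \<and> j \<le> n \<and> coprime j n} = {j\<in>{0<..<n}. coprime j n}"
    using assms by (auto simp: le_less)
  then show ?thesis by (simp add: cyclotomic_poly_def)
qed

lemma poly_cyclotomic_poly_1_neq_0:
  assumes "n > 1"
  shows "poly (cyclotomic_poly n) 1 \<noteq> 0"
  using assms cis_root_of_unity_neq_1[of _ n]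
  by (auto simp: cyclotomic_poly_altdef poly_prod)

text \<open>The coefficient of \<open>t\<^sup>i\<close> in \<open>log (\<Phi>\<^sub>n(e\<^sup>t) / \<Phi>\<^sub>n(1))\<close>.\<close>
definition cyclotomic_log_coeff :: "nat \<Rightarrow> nat \<Rightarrow> real" where
  "cyclotomic_log_coeff n i = (- 1) ^ i * bernoulli_num i / (fact i * real i) * jordan_totient i n"

lemma Suc_times_cyclotomic_log_coeff:
  "real (Suc i) * cyclotomic_log_coeff n (Suc i)
    = (if i = 0 then jordan_totient 1 n else 0)
      + bernoulli_num (Suc i) * jordan_totient (Suc i) n / fact (Suc i)"
proof (cases "odd i")
  case True
  then show ?thesis by (auto simp: cyclotomic_log_coeff_def field_simps simp del: of_nat_Suc)
next
  case False
  then show ?thesis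
    by (cases "i = 0") (auto simp: cyclotomic_log_coeff_def bernoulli_num_odd simp flip: One_nat_def)
qed

lemma sum_exp_div_exp_minus_roots_of_unity_multiples_nth:
  assumes "m dvd n" "m > 0" "n > 0"
  shows "(\<Sum>j\<in>{j\<in>{0<..<n}. m dvd j}.
            fps_exp 1 * inverse (fps_exp 1 - fps_const (cis (2 * pi * real j / real n)))) $ i
    = (if i = 0 then of_nat (n div m) - 1 else 0)
      + of_real (bernoulli_num (Suc i)) * (of_nat (n div m) ^ Suc i - 1) / fact (Suc i)"
proof -
  obtain M where n: "n = m * M" and "M > 0"
    using assms by (auto elim!: dvdE)
  have arg: "2 * pi * real (m * l) / real n = 2 * pi * real l / real M" for l
    using \<open>m > 0\<close> by (simp add: n field_simps)
  have "(\<Sum>j\<in>{j\<in>{0<..<n}. m dvd j}.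
        fps_exp 1 * inverse (fps_exp 1 - fps_const (cis (2 * pi * real j / real n))))
      = (\<Sum>l\<in>{0<..<n div m}.
        fps_exp 1 * inverse (fps_exp 1 - fps_const (cis (2 * pi * real (m * l) / real n))))"
    by (rule sum_multiples[OF assms(1,2)])
  also have "\<dots> = (\<Sum>l\<in>{0<..<M}. fps_exp 1 * inverse (fps_exp 1 - fps_const (cis (2 * pi * real l / real M))))"
    unfolding arg using \<open>m > 0\<close> by (simp add: n)
  finally show ?thesis
    using \<open>m > 0\<close> by (simp add: sum_exp_div_exp_minus_roots_of_unity[OF \<open>M > 0\<close>] n)
qed

lemma sum_exp_div_exp_minus_primitive_roots_nth:
  assumes "n > 1"
  shows "(\<Sum>j\<in>{j\<in>{0<..<n}. coprime j n}.
            fps_exp 1 * inverse (fps_exp 1 - fps_const (cis (2 * pi * real j / real n)))) $ i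
    = of_real (real (Suc i) * cyclotomic_log_coeff n (Suc i))"
proof -
  define f where "f j = (fps_exp 1 * inverse (fps_exp 1 - fps_const (cis (2 * pi * real j / real n)))) $ i" for j
  define M where "M S = n div (\<Prod>p\<in>S. p)" for S
  define a :: complex where "a = (if i = 0 then 1 else 0)"
  define b :: complex where "b = of_real (bernoulli_num (Suc i)) / fact (Suc i)"
  have multiples: "(\<Sum>j\<in>{j\<in>{0<..<n}. (\<Prod>p\<in>S. p) dvd j}. f j)
      = a * (of_nat (M S) - 1) + b * (of_nat (M S) ^ Suc i - 1)" if "S \<subseteq> prime_factors n" for S
  proof -
    have "(\<Prod>p\<in>S. p) > 0"
      using that by (auto simp: in_prime_factors_iff prime_gt_0_nat intro!: prod_pos)
    with prod_prime_factors_subset_dvd[OF that] assms show ?thesis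
      using sum_exp_div_exp_minus_roots_of_unity_multiples_nth[of "\<Prod>p\<in>S. p" n i]
      by (simp add: f_def M_def a_def b_def fps_sum_nth)
  qed
  have jordan: "of_real (jordan_totient r n) = (\<Sum>S\<in>Pow (prime_factors n). (- 1) ^ card S * of_nat (M S) ^ r)" for r
    using jordan_totient_inclusion_exclusion[of n r] assms by (simp add: M_def)
  have "prime_factors n \<noteq> {}" using assms by (simp add: prime_factorization_empty_iff)
  then have alternating: "(\<Sum>S\<in>Pow (prime_factors n). (- 1 :: complex) ^ card S) = 0"
    by (simp add: sum_Pow_minus_one_power_card)
  have "(\<Sum>j\<in>{j\<in>{0<..<n}. coprime j n}. f j)
      = (\<Sum>S\<in>Pow (prime_factors n). (- 1) ^ card S * (\<Sum>j\<in>{j\<in>{0<..<n}. (\<Prod>p\<in>S. p) dvd j}. f j))"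
    using assms by (intro sum_coprime_inclusion_exclusion) auto
  also have "\<dots> = (\<Sum>S\<in>Pow (prime_factors n). (- 1) ^ card S * (a * (of_nat (M S) - 1) + b * (of_nat (M S) ^ Suc i - 1)))"
    by (intro sum.cong refl arg_cong[where f = "(*) _"] multiples) auto
  also have "\<dots> = a * (\<Sum>S\<in>Pow (prime_factors n). (- 1) ^ card S * of_nat (M S) ^ 1)
      + b * (\<Sum>S\<in>Pow (prime_factors n). (- 1) ^ card S * of_nat (M S) ^ Suc i)
      - (a + b) * (\<Sum>S\<in>Pow (prime_factors n). (- 1) ^ card S)"
    by (simp add: sum_distrib_left algebra_simps sum.distrib sum_subtractf)
  also have "\<dots> = of_real ((if i = 0 then jordan_totient 1 n else 0)
      + bernoulli_num (Suc i) * jordan_totient (Suc i) n / fact (Suc i))"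
    by (simp only: alternating flip: jordan) (simp add: a_def b_def)
  finally have "(\<Sum>j\<in>{j\<in>{0<..<n}. coprime j n}. f j) = of_real (real (Suc i) * cyclotomic_log_coeff n (Suc i))"
    by (simp only: Suc_times_cyclotomic_log_coeff)
  then show ?thesis by (simp only: f_def fps_sum_nth)
qed

lemma fps_deriv_fps_poly_exp_cyclotomic_poly:
  assumes "n > 1"
  shows "fps_deriv (fps_poly_exp (cyclotomic_poly n))
    = Abs_fps (\<lambda>i. of_real (real (Suc i) * cyclotomic_log_coeff n (Suc i))) * fps_poly_exp (cyclotomic_poly n)"
proof -
  define J where "J = {j\<in>{0<..<n}. coprime j n}"
  define \<zeta> where "\<zeta> j = cis (2 * pi * real j / real n)" for j
  have cyclo: "fps_poly_exp (cyclotomic_poly n) = (\<Prod>j\<in>J. fps_exp 1 - fps_const (\<zeta> j))"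
    using assms by (simp add: cyclotomic_poly_altdef fps_poly_exp_prod fps_poly_exp_linear J_def \<zeta>_def)
  have "(fps_exp 1 - fps_const (\<zeta> j)) $ 0 \<noteq> 0" if "j \<in> J" for j
    using cis_root_of_unity_neq_1[of j n] that by (auto simp: J_def \<zeta>_def)
  then have "fps_deriv (fps_poly_exp (cyclotomic_poly n))
      = (\<Sum>j\<in>J. fps_exp 1 * inverse (fps_exp 1 - fps_const (\<zeta> j))) * fps_poly_exp (cyclotomic_poly n)"
    unfolding cyclo by (subst fps_deriv_prod) (auto simp: J_def)
  moreover have "(\<Sum>j\<in>J. fps_exp 1 * inverse (fps_exp 1 - fps_const (\<zeta> j)))
      = Abs_fps (\<lambda>i. of_real (real (Suc i) * cyclotomic_log_coeff n (Suc i)))"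
    using sum_exp_div_exp_minus_primitive_roots_nth[OF assms]
    by (intro fps_ext) (simp only: J_def \<zeta>_def fps_nth_Abs_fps)
  ultimately show ?thesis by simp
qed

lemma fps_poly_exp_cyclotomic_poly_nth:
  assumes "n > 1"
  shows "fps_poly_exp (cyclotomic_poly n) $ m
    = poly (cyclotomic_poly n) 1 * of_real (exp_coeff (cyclotomic_log_coeff n) m)"
  using fps_nth_eq_exp_coeff[OF fps_deriv_fps_poly_exp_cyclotomic_poly[OF assms]]
  by (simp add: fps_poly_exp_nth_0)

lemma abs_cyclotomic_log_coeff_le:
  "\<bar>cyclotomic_log_coeff n i\<bar> \<le> \<bar>bernoulli_num i\<bar> / (fact i * real i) * real n ^ i"
proof -
  have "\<bar>cyclotomic_log_coeff n i\<bar> = \<bar>bernoulli_num i\<bar> / (fact i * real i) * jordan_totient i n"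
    using jordan_totient_nonneg[of i n] by (simp add: cyclotomic_log_coeff_def abs_mult abs_divide)
  also have "\<dots> \<le> \<bar>bernoulli_num i\<bar> / (fact i * real i) * real n ^ i"
    by (intro mult_left_mono jordan_totient_le) simp
  finally show ?thesis .
qed

lemma exp_coeff_cyclotomic_log_coeff:
  "exp_coeff (cyclotomic_log_coeff n) k
    = (\<Sum>l\<in>partition_tuples k. \<Prod>i=1..k. (- 1) ^ (i * l i) / fact (l i)
         * (bernoulli_num i / (fact i * real i)) ^ l i * jordan_totient i n ^ l i)"
proof -
  have "((- 1) ^ i * bernoulli_num i / (fact i * real i) * jordan_totient i n) ^ m / fact m
      = (- 1) ^ (i * m) / fact m * (bernoulli_num i / (fact i * real i)) ^ m * jordan_totient i n ^ m"
    for i m :: nat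
    by (simp add: power_mult_distrib power_divide power_mult)
  then show ?thesis
    unfolding exp_coeff_def cyclotomic_log_coeff_def by simp
qed

lemma higher_pderiv_cyclotomic_poly_at_1:
  "\<exists>C. \<forall>n>1. cmod (poly ((pderiv ^^ k) (cyclotomic_poly n)) 1 / poly (cyclotomic_poly n) 1
      - of_real (fact k * exp_coeff (cyclotomic_log_coeff n) k)) \<le> C * real n ^ (k - 1)"
proof -
  define a where "a n m = Polynomial.coeff (pcompose (cyclotomic_poly n) [:1, 1:]) m / poly (cyclotomic_poly n) 1" for n m
  define b where "b n m = complex_of_real (exp_coeff (cyclotomic_log_coeff n) m)" for n m
  have system: "(\<Sum>i\<le>m. a n i * ((fps_exp 1 - 1) ^ i) $ m) = b n m" if "n \<in> {1<..}" for n m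
    using fps_poly_exp_cyclotomic_poly_nth[of n m] poly_cyclotomic_poly_1_neq_0[of n] that
    by (simp add: a_def b_def fps_poly_exp_nth atLeast0AtMost field_simps flip: sum_divide_distrib)
  have diagonal: "((fps_exp (1::complex) - 1) ^ m) $ m = 1" for m
    by (simp add: startsby_zero_power_nth_same)
  have b_bound: "\<exists>C. \<forall>n\<in>{1<..}. norm (b n m) \<le> C * real n ^ m" for m
    using abs_exp_coeff_le[OF abs_cyclotomic_log_coeff_le] by (auto simp: b_def)
  obtain C where C: "\<forall>n\<in>{1<..}. norm (a n k - b n k) \<le> C * real n ^ (k - 1)"
    using unitriangular_system_bound[OF system diagonal b_bound, of k] by fastforce
  have "poly ((pderiv ^^ k) (cyclotomic_poly n)) 1 / poly (cyclotomic_poly n) 1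
      - of_real (fact k * exp_coeff (cyclotomic_log_coeff n) k) = fact k * (a n k - b n k)" if "n > 1" for n
    using poly_cyclotomic_poly_1_neq_0[OF that] by (simp add: poly_higher_pderiv a_def b_def field_simps)
  then show ?thesis
    using C by (intro exI[of _ "fact k * C"]) (auto simp: norm_mult)
qed

theorem mainTheorem10:
  fixes k :: nat
  assumes "k \<ge> 1"
  shows "\<exists>C::real. \<forall>n::nat. n > 1 \<longrightarrow>
    cmod (poly ((pderiv ^^ k) (cyclotomic_poly n)) 1
            / (of_nat (totient n) ^ k * poly (cyclotomic_poly n) 1)
          - complex_of_real
              (fact k * (\<Sum>l\<in>partition_tuples k.
                 (\<Prod>i=1..k. (-1) ^ (i * l i) / fact (l i)
                     * (bernoulli_num i / (fact i * real i)) ^ l i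
                     * jordan_totient i n ^ l i)
                 / real (totient n) ^ k)))
      \<le> C * real n ^ (k - 1) / real (totient n) ^ k"
proof -
  define P where "P n = poly ((pderiv ^^ k) (cyclotomic_poly n)) 1" for n
  define \<Phi>\<^sub>1 where "\<Phi>\<^sub>1 n = poly (cyclotomic_poly n) 1" for n
  define e where "e n = exp_coeff (cyclotomic_log_coeff n) k" for n
  obtain C where C: "\<forall>n>1. cmod (P n / \<Phi>\<^sub>1 n - of_real (fact k * e n)) \<le> C * real n ^ (k - 1)"
    using higher_pderiv_cyclotomic_poly_at_1[of k] by (auto simp: P_def \<Phi>\<^sub>1_def e_def)
  have "P n / (of_nat (totient n) ^ k * \<Phi>\<^sub>1 n) - of_real (fact k * (e n / real (totient n) ^ k))
      = (P n / \<Phi>\<^sub>1 n - of_real (fact k * e n)) / of_nat (totient n) ^ k" if "n > 1" for n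
    using that poly_cyclotomic_poly_1_neq_0[OF that] by (simp add: \<Phi>\<^sub>1_def field_simps)
  then have "\<forall>n>1. cmod (P n / (of_nat (totient n) ^ k * \<Phi>\<^sub>1 n) - of_real (fact k * (e n / real (totient n) ^ k)))
      \<le> C * real n ^ (k - 1) / real (totient n) ^ k"
    using C by (auto simp: norm_divide norm_power intro: divide_right_mono)
  then show ?thesis
    unfolding P_def \<Phi>\<^sub>1_def e_def exp_coeff_cyclotomic_log_coeff sum_divide_distrib by blast
qed

end
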